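(* Let $a,b\in\mathbb{R}$, $\lambda\in\mathbb{C}$, and $n,k\in\mathbb{N}_0$. Then $$y_{3}(n,k;\lambda;a,b)=\sum_{j=0}^{k}\sum_{m=0}^{n}\binom{n}{m}a^{m}b^{n-m}\,y_{1}(m,j;\lambda)\,S_{2}(n-m,k-j).$$
   Context: For $a,b\in\mathbb{R}$, $\lambda\in\mathbb{C}$ and $k\in\mathbb{N}_0$: the numbers $y_3(n,k;\lambda;a,b)$ are defined by $\frac{e^{bkt}}{k!}(\lambda e^{(a-b)t}+1)^{k}=\sum_{n\ge0}y_{3}(n,k;\lambda;a,b)\frac{t^{n}}{n!}$; the numbers $y_1(n,k;\lambda)$ are defined by $\frac{1}{k!}(\lambda e^{t}+1)^{k}=\sum_{n\ge0}y_{1}(n,k;\lambda)\frac{t^{n}}{n!}$; and $S_2(n,k)$ denotes the Stirling numbers of the second kind, defined by $\frac{(e^{t}-1)^{k}}{k!}=\sum_{n\ge0}S_2(n,k)\frac{t^{n}}{n!}$. Convention: $0^0=1$. *)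

theory Defs
  imports "HOL-Analysis.Analysis" "HOL-Computational_Algebra.Formal_Power_Series"
begin

text \<open>All numbers are defined through their exponential generating functions,
  realised as formal power series over the complex numbers:
  if F = sum c_n t^n/n! then c_n = n! * fps_nth F n.\<close>

definition y3 :: "nat \<Rightarrow> nat \<Rightarrow> complex \<Rightarrow> real \<Rightarrow> real \<Rightarrow> complex" where
  "y3 n k lam a b = fact n * fps_nth
     (fps_const (1 / fact k) * fps_exp (of_real b * of_nat k)
        * (fps_const lam * fps_exp (of_real (a - b)) + 1) ^ k) n"

definition y1 :: "nat \<Rightarrow> nat \<Rightarrow> complex \<Rightarrow> complex" where
  "y1 n k lam = fact n * fps_nth
     (fps_const (1 / fact k) * (fps_const lam * fps_exp 1 + 1) ^ k) n"

definition S2 :: "nat \<Rightarrow> nat \<Rightarrow> complex" where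
  "S2 n k = fact n * fps_nth (fps_const (1 / fact k) * (fps_exp 1 - 1) ^ k) n"

end

theory Submission
  imports Defs
begin

text \<open>Since \<open>e\<^bsup>bt\<^esup> = 1 + (e\<^bsup>bt\<^esup> - 1)\<close>, the generating function of \<open>y\<^sub>3\<close> is
  \<open>(\<lambda>e\<^bsup>at\<^esup> + 1 + (e\<^bsup>bt\<^esup> - 1))\<^sup>k / k!\<close>; the binomial theorem splits it into
  \<open>\<Sum>\<^sub>j\<close> (generating function of \<open>y\<^sub>1(\<cdot>,j)\<close> at \<open>at\<close>) times (generating function of
  \<open>S\<^sub>2(\<cdot>,k-j)\<close> at \<open>bt\<close>). Substituting \<open>t \<mapsto> ct\<close> multiplies the \<open>m\<close>-th coefficient
  by \<open>c\<^sup>m\<close>, and products of exponential generating functions convolve their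
  coefficients binomially.\<close>

lemma fps_mult_nth_exponential:
  fixes F G :: "'a::field_char_0 fps"
  shows "fact n * fps_nth (F * G) n =
    (\<Sum>m=0..n. of_nat (n choose m) * (fact m * fps_nth F m) * (fact (n - m) * fps_nth G (n - m)))"
  unfolding fps_mult_nth sum_distrib_left
proof (rule sum.cong[OF refl])
  fix m assume "m \<in> {0..n}"
  then have "(of_nat (n choose m) :: 'a) = fact n / (fact m * fact (n - m))"
    by (simp add: binomial_fact)
  then show "fact n * (fps_nth F m * fps_nth G (n - m)) =
      of_nat (n choose m) * (fact m * fps_nth F m) * (fact (n - m) * fps_nth G (n - m))"
    by (simp add: field_simps)
qed

lemma fps_power_add_div_fact:
  fixes X Y :: "'a::field_char_0 fps"
  shows "fps_const (1 / fact k) * (X + Y) ^ k =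
    (\<Sum>j\<le>k. (fps_const (1 / fact j) * X ^ j) * (fps_const (1 / fact (k - j)) * Y ^ (k - j)))"
  unfolding binomial_ring sum_distrib_left
proof (rule sum.cong[OF refl])
  fix j assume "j \<in> {..k}"
  then have "(1 / fact k) * (of_nat (k choose j) :: 'a) = (1 / fact j) * (1 / fact (k - j))"
    by (simp add: binomial_fact field_simps)
  then have "fps_const (1 / fact k) * of_nat (k choose j) =
      fps_const (1 / fact j) * (fps_const (1 / fact (k - j)) :: 'a fps)"
    by (metis fps_const_mult fps_of_nat)
  then show "fps_const (1 / fact k) * (of_nat (k choose j) * X ^ j * Y ^ (k - j)) =
      fps_const (1 / fact j) * X ^ j * (fps_const (1 / fact (k - j)) * Y ^ (k - j))"
    by (metis (no_types, lifting) mult.assoc mult.left_commute)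
qed

definition y1_egf :: "complex \<Rightarrow> nat \<Rightarrow> complex fps" where
  "y1_egf lam k = fps_const (1 / fact k) * (fps_const lam * fps_exp 1 + 1) ^ k"

definition S2_egf :: "nat \<Rightarrow> complex fps" where
  "S2_egf k = fps_const (1 / fact k) * (fps_exp 1 - 1) ^ k"

lemma y1_eq_egf_nth: "y1 n k lam = fact n * fps_nth (y1_egf lam k) n"
  by (simp add: y1_def y1_egf_def)

lemma S2_eq_egf_nth: "S2 n k = fact n * fps_nth (S2_egf k) n"
  by (simp add: S2_def S2_egf_def)

lemma y1_egf_compose_linear:
  "y1_egf lam k oo (fps_const c * fps_X) =
    fps_const (1 / fact k) * (fps_const lam * fps_exp c + 1) ^ k"
  by (simp add: y1_egf_def fps_compose_mult_distrib fps_compose_add_distrib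
      flip: fps_compose_power)

lemma S2_egf_compose_linear:
  "S2_egf k oo (fps_const c * fps_X) = fps_const (1 / fact k) * (fps_exp c - 1) ^ k"
  by (simp add: S2_egf_def fps_compose_mult_distrib fps_compose_sub_distrib
      flip: fps_compose_power)

lemma y3_egf_eq_power:
  fixes a b :: real and lam :: complex
  shows "fps_const (1 / fact k) * fps_exp (of_real b * of_nat k)
      * (fps_const lam * fps_exp (of_real (a - b)) + 1) ^ k =
    fps_const (1 / fact k) * (fps_const lam * fps_exp (of_real a) + fps_exp (of_real b)) ^ k"
proof -
  have "fps_exp (of_real b * of_nat k) * (fps_const lam * fps_exp (of_real (a - b)) + 1) ^ k =
      (fps_exp (of_real b) * (fps_const lam * fps_exp (of_real (a - b)) + 1)) ^ k"
    unfolding power_mult_distrib fps_exp_power_mult by (simp add: mult.commute)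
  also have "fps_exp (of_real b) * (fps_const lam * fps_exp (of_real (a - b)) + 1) =
      fps_const lam * fps_exp (of_real a) + fps_exp (of_real b)"
    by (simp add: algebra_simps flip: fps_exp_add_mult)
  finally show ?thesis
    by (simp only: mult.assoc)
qed

lemma y3_egf_split:
  fixes a b :: real and lam :: complex
  shows "fps_const (1 / fact k) * fps_exp (of_real b * of_nat k)
      * (fps_const lam * fps_exp (of_real (a - b)) + 1) ^ k =
    (\<Sum>j\<le>k. (y1_egf lam j oo (fps_const (of_real a) * fps_X))
      * (S2_egf (k - j) oo (fps_const (of_real b) * fps_X)))"
proof -
  have "fps_const lam * fps_exp (of_real a) + fps_exp (of_real b) =
      (fps_const lam * fps_exp (of_real a) + 1) + (fps_exp (of_real b) - 1)"
    by simp
  then show ?thesis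
    unfolding y3_egf_eq_power y1_egf_compose_linear S2_egf_compose_linear
    by (simp only: fps_power_add_div_fact)
qed

theorem mainTheorem2:
  fixes a b :: real and lam :: complex and n k :: nat
  shows "y3 n k lam a b =
    (\<Sum>j=0..k. \<Sum>m=0..n. of_nat (n choose m) * of_real a ^ m * of_real b ^ (n - m)
        * y1 m j lam * S2 (n - m) (k - j))"
proof -
  have "y3 n k lam a b = (\<Sum>j\<le>k. fact n * fps_nth ((y1_egf lam j oo (fps_const (of_real a) * fps_X))
      * (S2_egf (k - j) oo (fps_const (of_real b) * fps_X))) n)"
    unfolding y3_def y3_egf_split by (simp add: fps_sum_nth sum_distrib_left)
  also have "\<dots> = (\<Sum>j=0..k. \<Sum>m=0..n. of_nat (n choose m) * of_real a ^ m * of_real b ^ (n - m)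
        * y1 m j lam * S2 (n - m) (k - j))"
    unfolding atMost_atLeast0 fps_mult_nth_exponential fps_nth_compose_linear
    by (simp add: y1_eq_egf_nth S2_eq_egf_nth mult_ac)
  finally show ?thesis .
qed

end
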